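(* Let $r\ge2$ and let $\mathbf L^{\mathrm{MAP}}\in\mathbb R_+^{(2^r-1)\times r!}$ be the matrix with rows indexed by $\mathbf y\in\{0,1\}^r\setminus\{\mathbf 0\}$, columns indexed by $\sigma\in\Pi_r$, and entries \[ \ell^{\mathrm{MAP}}(\mathbf y,\sigma)=1-\frac{1}{\|\mathbf y\|_1}\sum_{i:\,y_i=1}\frac{1}{\sigma(i)}\sum_{j=1}^{\sigma(i)}y_{\sigma^{-1}(j)} . \] Then $\operatorname{rank}(\mathbf L^{\mathrm{MAP}})\ge\frac{r(r-1)}{2}-2$.
   Context: $\Pi_r$ is the set of all permutations (bijections) $\sigma:[r]\to[r]$, where $[r]=\{1,\dots,r\}$ and $\sigma(i)$ is the position of element $i$; $\sigma^{-1}(j)$ is the element placed at position $j$. $\|\mathbf y\|_1=\sum_i|y_i|$. Equivalently, $\ell^{\mathrm{MAP}}(\mathbf y,\sigma)=1-\frac{1}{\|\mathbf y\|_1}\sum_{i=1}^r\sum_{j=1}^{i}\frac{y_iy_j}{\max(\sigma(i),\sigma(j))}$. *)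

theory Defs
  imports "Jordan_Normal_Form.DL_Rank" "HOL-Combinatorics.Permutations"
begin

definition ys_set :: "nat \<Rightarrow> (nat \<Rightarrow> real) set" where
  "ys_set r = {y. (\<forall>i\<in>{1..r}. y i \<in> {0,1}) \<and> (\<forall>i. i \<notin> {1..r} \<longrightarrow> y i = 0)
                  \<and> y \<noteq> (\<lambda>_. 0)}"

text \<open>Permutations of [r]; sigma i is the position of element i.\<close>
definition perms_set :: "nat \<Rightarrow> (nat \<Rightarrow> nat) set" where
  "perms_set r = {\<sigma>. \<sigma> permutes {1..r}}"

definition l1norm :: "nat \<Rightarrow> (nat \<Rightarrow> real) \<Rightarrow> real" where
  "l1norm r y = (\<Sum>i=1..r. \<bar>y i\<bar>)"

definition ell_MAP :: "nat \<Rightarrow> (nat \<Rightarrow> real) \<Rightarrow> (nat \<Rightarrow> nat) \<Rightarrow> real" where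
  "ell_MAP r y \<sigma> = 1 - (1 / l1norm r y) *
     (\<Sum>i\<in>{i\<in>{1..r}. y i = 1}. (1 / real (\<sigma> i)) * (\<Sum>j=1..\<sigma> i. y (inv_into UNIV \<sigma> j)))"

definition L_MAP :: "nat \<Rightarrow> (nat \<Rightarrow> real) list \<Rightarrow> (nat \<Rightarrow> nat) list \<Rightarrow> real mat" where
  "L_MAP r ys ss = mat (length ys) (length ss) (\<lambda>(a,b). ell_MAP r (ys ! a) (ss ! b))"

end

theory Submission
  imports Defs
begin

(*
  Restrict attention to the r(r-1)/2 rows labelled by the pair indicators e_u + e_v (u < v).
  If the items u and v sit at positions a and b, the MAP loss of such a label is
  pair_loss a b = 1 - 1/(2 min a b) - 1/(max a b).  We show that these rows are linearly
  independent (for r >= 3), which gives rank >= r(r-1)/2; for r = 2 the bound is trivial.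

  Independence: a vanishing combination sum_{u<v} c(u,v) pair_loss(sigma u, sigma v) = 0 for all
  permutations sigma is an "energy" of a symmetric weight C that vanishes identically.
  Comparing sigma with sigma composed with the transposition (u v), for permutations that put
  u, v (and a third item w) at the first positions, shows that all off-diagonal weights are
  equal; as the energy of a positive constant weight is positive, C = 0.
*)

text \<open>MAP loss of a label with exactly two relevant items, placed at positions a and b.\<close>
definition pair_loss :: "nat \<Rightarrow> nat \<Rightarrow> real" where
  "pair_loss a b = 1 - 1 / (2 * real (min a b)) - 1 / real (max a b)"

lemma pair_loss_sym: "pair_loss a b = pair_loss b a"
  unfolding pair_loss_def by (simp add: min.commute max.commute)

text \<open>Averaging over the two relevant items of 1/position times the number of relevant items
  up to that position (2 for the later item, 1 for the earlier one) gives the pair loss.\<close>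
lemma pair_loss_by_precedence:
  assumes "a \<noteq> b"
  shows "1 - (1/2) * (1 / real a * (if b < a then 2 else 1) + 1 / real b * (if a < b then 2 else 1))
    = pair_loss a b"
proof (cases "a < b")
  case True
  then show ?thesis by (simp add: pair_loss_def min_def max_def add_divide_distrib)
next
  case False
  then have "b < a" using assms by simp
  then show ?thesis by (simp add: pair_loss_def min_def max_def add_divide_distrib)
qed

lemma pair_loss_diff_1_2: "3 \<le> s \<Longrightarrow> pair_loss 1 s - pair_loss 2 s = - 1/4"
  unfolding pair_loss_def by (simp add: min_def max_def)

lemma pair_loss_diff_2_3_at_1: "pair_loss 2 1 - pair_loss 3 1 = - 1/6"
  unfolding pair_loss_def by (simp add: min_def max_def)

lemma pair_loss_diff_2_3: "4 \<le> s \<Longrightarrow> pair_loss 2 s - pair_loss 3 s = - 1/12"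
  unfolding pair_loss_def by (simp add: min_def max_def)

lemma pair_loss_1_3: "pair_loss 1 3 = 1/6"
  unfolding pair_loss_def by simp

lemma pair_loss_nonneg:
  assumes "1 \<le> a" and "1 \<le> b" and "a \<noteq> b"
  shows "0 \<le> pair_loss a b"
proof -
  have "1 / (2 * real (min a b)) \<le> 1/2" and "1 / real (max a b) \<le> 1/2"
    using assms by (auto simp: field_simps max_def)
  then show ?thesis unfolding pair_loss_def by linarith
qed

lemma permutation_with_prefix:
  assumes "distinct xs" and "set xs \<subseteq> {1..r}"
  shows "\<exists>\<sigma>. \<sigma> permutes {1..r} \<and> (\<forall>i<length xs. \<sigma> (xs ! i) = Suc i)"
  using assms
proof (induction xs rule: rev_induct)
  case Nil
  show ?case
    by (intro exI[of _ id] conjI permutes_id) simp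
next
  case (snoc w xs)
  let ?k = "Suc (length xs)"
  have xs: "distinct xs" "set xs \<subseteq> {1..r}" and w: "w \<in> {1..r}" and w_new: "w \<notin> set xs"
    using snoc.prems by auto
  obtain \<rho> where \<rho>: "\<rho> permutes {1..r}" and prefix: "\<forall>i<length xs. \<rho> (xs ! i) = Suc i"
    using snoc.IH[OF xs] by auto
  have "?k = card (set (xs @ [w]))" using distinct_card[OF snoc.prems(1)] by simp
  also have "\<dots> \<le> r" using card_mono[OF _ snoc.prems(2)] by simp
  finally have k: "?k \<in> {1..r}" by simp
  define \<sigma> where "\<sigma> = transpose (\<rho> w) ?k \<circ> \<rho>"
  have "\<rho> w \<in> {1..r}" using permutes_in_image[OF \<rho>] w by simp
  then have "\<sigma> permutes {1..r}" unfolding \<sigma>_def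
    using \<rho> k by (intro permutes_compose) (simp_all add: permutes_swap_id)
  moreover have "\<sigma> w = ?k" by (simp add: \<sigma>_def)
  moreover have "\<sigma> (xs ! i) = Suc i" if "i < length xs" for i
  proof -
    have "xs ! i \<noteq> w" using that w_new nth_mem by blast
    then have "\<rho> (xs ! i) \<noteq> \<rho> w" using permutes_inj[OF \<rho>] by (auto dest: injD)
    then show ?thesis using prefix that by (simp add: \<sigma>_def transpose_def)
  qed
  ultimately show ?case by (auto simp: nth_append less_Suc_eq)
qed

lemma permutes_other_position:
  assumes "\<sigma> permutes {1..r}" and "y \<in> {1..r}" and "y \<noteq> u" and "\<sigma> u = k"
  shows "\<sigma> y \<noteq> k" and "\<sigma> y \<in> {1..r}"
  using assms permutes_inj[OF assms(1)] permutes_in_image[OF assms(1)] by (auto dest: injD)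

section \<open>The pair energy of a symmetric weight\<close>

definition pair_energy :: "nat \<Rightarrow> (nat \<Rightarrow> nat \<Rightarrow> real) \<Rightarrow> (nat \<Rightarrow> nat) \<Rightarrow> real" where
  "pair_energy r C \<sigma> = (\<Sum>x\<in>{1..r}. \<Sum>y\<in>{1..r}. C x y * pair_loss (\<sigma> x) (\<sigma> y))"

lemma double_sum_permute:
  fixes F :: "'a \<Rightarrow> 'a \<Rightarrow> 'b::comm_monoid_add"
  assumes "\<tau> permutes S"
  shows "(\<Sum>x\<in>S. \<Sum>y\<in>S. F (\<tau> x) (\<tau> y)) = (\<Sum>x\<in>S. \<Sum>y\<in>S. F x y)"
proof -
  have bij: "bij_betw \<tau> S S" using assms permutes_imp_bij by blast
  have "(\<Sum>x\<in>S. \<Sum>y\<in>S. F (\<tau> x) (\<tau> y)) = (\<Sum>x\<in>S. \<Sum>y\<in>S. F (\<tau> x) y)"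
    by (rule sum.cong[OF refl], rule sum.reindex_bij_betw[OF bij])
  also have "\<dots> = (\<Sum>x\<in>S. \<Sum>y\<in>S. F x y)"
    by (rule sum.reindex_bij_betw[OF bij, where g = "\<lambda>x. \<Sum>y\<in>S. F x y"])
  finally show ?thesis .
qed

lemma double_sum_insert2:
  fixes D :: "'a \<Rightarrow> 'a \<Rightarrow> 'b::comm_monoid_add"
  assumes "finite R" and "u \<notin> R" and "v \<notin> R" and "u \<noteq> v"
  shows "(\<Sum>x\<in>insert u (insert v R). \<Sum>y\<in>insert u (insert v R). D x y)
    = (D u u + D u v + D v u + D v v) + (\<Sum>y\<in>R. D u y + D v y) + (\<Sum>x\<in>R. D x u + D x v)
      + (\<Sum>x\<in>R. \<Sum>y\<in>R. D x y)"
  using assms by (simp add: sum.distrib ac_simps)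

text \<open>Exchanging the positions of u and v changes the energy only through the pairs {u,y}
  and {v,y} with y outside {u,v}.\<close>
lemma pair_energy_swap:
  assumes \<sigma>: "\<sigma> permutes {1..r}" and u: "u \<in> {1..r}" and v: "v \<in> {1..r}" and uv: "u \<noteq> v"
    and diag: "\<And>x. C x x = 0" and sym: "\<And>x y. C x y = C y x"
  shows "pair_energy r C \<sigma> - pair_energy r C (\<sigma> \<circ> transpose u v)
     = 2 * (\<Sum>y\<in>{1..r}-{u,v}. (C u y - C v y) * (pair_loss (\<sigma> u) (\<sigma> y) - pair_loss (\<sigma> v) (\<sigma> y)))"
proof -
  define \<tau> where "\<tau> = transpose u v"
  define K where "K a b = pair_loss (\<sigma> a) (\<sigma> b)" for a b
  define D where "D x y = (C x y - C (\<tau> x) (\<tau> y)) * K x y" for x y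
  define E where "E y = (C u y - C v y) * (K u y - K v y)" for y
  define R where "R = {1..r} - {u,v}"
  have \<tau>: "\<tau> permutes {1..r}" unfolding \<tau>_def using u v by (simp add: permutes_swap_id)
  have \<tau>_inv: "\<tau> (\<tau> x) = x" for x unfolding \<tau>_def by simp
  have \<tau>_uv: "\<tau> u = v" "\<tau> v = u" and \<tau>_R: "x \<in> R \<Longrightarrow> \<tau> x = x" for x
    unfolding \<tau>_def R_def by auto
  have "pair_energy r C (\<sigma> \<circ> \<tau>)
      = (\<Sum>x\<in>{1..r}. \<Sum>y\<in>{1..r}. C (\<tau> (\<tau> x)) (\<tau> (\<tau> y)) * K (\<tau> x) (\<tau> y))"
    unfolding pair_energy_def K_def by (simp add: \<tau>_inv)
  also have "\<dots> = (\<Sum>x\<in>{1..r}. \<Sum>y\<in>{1..r}. C (\<tau> x) (\<tau> y) * K x y)"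
    by (rule double_sum_permute[OF \<tau>, where F = "\<lambda>x y. C (\<tau> x) (\<tau> y) * K x y"])
  finally have "pair_energy r C \<sigma> - pair_energy r C (\<sigma> \<circ> \<tau>) = (\<Sum>x\<in>{1..r}. \<Sum>y\<in>{1..r}. D x y)"
    unfolding pair_energy_def D_def K_def by (simp add: sum_subtractf[symmetric] left_diff_distrib)
  also have "\<dots> = (\<Sum>y\<in>R. D u y + D v y) + (\<Sum>x\<in>R. D x u + D x v)"
  proof -
    have "{1..r} = insert u (insert v R)" using u v unfolding R_def by auto
    moreover have "D u u + D u v + D v u + D v v = 0"
      unfolding D_def using \<tau>_uv diag sym by simp
    moreover have "(\<Sum>y\<in>R. D x y) = 0" if "x \<in> R" for x
      using that \<tau>_R unfolding D_def by (intro sum.neutral) auto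
    moreover have "finite R" "u \<notin> R" "v \<notin> R" unfolding R_def by auto
    ultimately show ?thesis using double_sum_insert2[of R u v D] uv by simp
  qed
  also have "\<dots> = 2 * (\<Sum>y\<in>R. E y)"
  proof -
    have row: "D u y + D v y = E y" and column: "D y u + D y v = E y" if "y \<in> R" for y
      using that \<tau>_R \<tau>_uv pair_loss_sym unfolding D_def E_def K_def
      by (simp_all add: algebra_simps sym[of y])
    have "(\<Sum>y\<in>R. D u y + D v y) = (\<Sum>y\<in>R. E y)" by (rule sum.cong) (simp_all add: row)
    moreover have "(\<Sum>x\<in>R. D x u + D x v) = (\<Sum>y\<in>R. E y)" by (rule sum.cong) (simp_all add: column)
    ultimately show ?thesis by simp
  qed
  finally show ?thesis unfolding \<tau>_def R_def E_def K_def .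
qed

section \<open>A symmetric weight with vanishing energy is zero\<close>

context
  fixes r :: nat and C :: "nat \<Rightarrow> nat \<Rightarrow> real"
  assumes three_le_r: "3 \<le> r"
    and C_diag: "\<And>x. C x x = 0" and C_sym: "\<And>x y. C x y = C y x"
    and energy_vanishes: "\<And>\<sigma>. \<sigma> permutes {1..r} \<Longrightarrow> pair_energy r C \<sigma> = 0"
begin

text \<open>Since the energies of \<sigma> and of \<sigma> composed with (u v) agree, the swap difference vanishes.\<close>
lemma swap_balance:
  assumes \<sigma>: "\<sigma> permutes {1..r}" and u: "u \<in> {1..r}" and v: "v \<in> {1..r}" and uv: "u \<noteq> v"
  shows "(\<Sum>y\<in>{1..r}-{u,v}. (C u y - C v y) * (pair_loss (\<sigma> u) (\<sigma> y) - pair_loss (\<sigma> v) (\<sigma> y))) = 0"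
proof -
  have "\<sigma> \<circ> transpose u v permutes {1..r}"
    using \<sigma> u v by (intro permutes_compose) (auto simp: permutes_swap_id)
  then show ?thesis using pair_energy_swap[of \<sigma> r u v C, OF \<sigma> u v uv C_diag C_sym] energy_vanishes \<sigma> by simp
qed

text \<open>Putting u and v at positions 1 and 2, every other item contributes the same factor -1/4:
  the weights of u and of v towards the remaining items have equal sums.\<close>
lemma row_sums_balance:
  assumes u: "u \<in> {1..r}" and v: "v \<in> {1..r}" and uv: "u \<noteq> v"
  shows "(\<Sum>y\<in>{1..r}-{u,v}. C u y - C v y) = 0"
proof -
  obtain \<sigma> where \<sigma>: "\<sigma> permutes {1..r}" and prefix: "\<forall>i<length [u, v]. \<sigma> ([u, v] ! i) = Suc i"
    using permutation_with_prefix[of "[u, v]" r] u v uv by auto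
  have \<sigma>_u: "\<sigma> u = 1" and \<sigma>_v: "\<sigma> v = 2"
    using prefix[rule_format, of 0] prefix[rule_format, of 1] by simp_all
  have near: "(C u y - C v y) * (pair_loss (\<sigma> u) (\<sigma> y) - pair_loss (\<sigma> v) (\<sigma> y))
      = (C u y - C v y) * (-1/4)" if y: "y \<in> {1..r}-{u,v}" for y
  proof -
    have "\<sigma> y \<noteq> 1" "\<sigma> y \<noteq> 2" "\<sigma> y \<in> {1..r}"
      using permutes_other_position[OF \<sigma>] y \<sigma>_u \<sigma>_v by auto
    then show ?thesis using \<sigma>_u \<sigma>_v pair_loss_diff_1_2[of "\<sigma> y"] by simp
  qed
  have "(\<Sum>y\<in>{1..r}-{u,v}. C u y - C v y) * (-1/4) = (\<Sum>y\<in>{1..r}-{u,v}. (C u y - C v y) * (-1/4))"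
    by (rule sum_distrib_right)
  also have "\<dots> = (\<Sum>y\<in>{1..r}-{u,v}.
      (C u y - C v y) * (pair_loss (\<sigma> u) (\<sigma> y) - pair_loss (\<sigma> v) (\<sigma> y)))"
    by (rule sum.cong[OF refl near[symmetric]])
  also have "\<dots> = 0" by (rule swap_balance[OF \<sigma> u v uv])
  finally show ?thesis by simp
qed

text \<open>Putting w, u, v at positions 1, 2, 3, the item w contributes the factor -1/6 and all others
  -1/12; together with the balance of row sums this forces C u w = C v w.\<close>
lemma weight_transfer:
  assumes u: "u \<in> {1..r}" and v: "v \<in> {1..r}" and w: "w \<in> {1..r}"
    and uv: "u \<noteq> v" and uw: "u \<noteq> w" and vw: "v \<noteq> w"
  shows "C u w = C v w"
proof -
  obtain \<sigma> where \<sigma>: "\<sigma> permutes {1..r}"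
    and prefix: "\<forall>i<length [w, u, v]. \<sigma> ([w, u, v] ! i) = Suc i"
    using permutation_with_prefix[of "[w, u, v]" r] u v w uv uw vw by auto
  have \<sigma>_w: "\<sigma> w = 1" and \<sigma>_u: "\<sigma> u = 2" and \<sigma>_v: "\<sigma> v = 3"
    using prefix[rule_format, of 0] prefix[rule_format, of 1] prefix[rule_format, of 2] by simp_all
  define R where "R = {1..r} - {u,v,w}"
  define d where "d y = C u y - C v y" for y
  have split: "{1..r} - {u,v} = insert w R" "w \<notin> R" "finite R"
    unfolding R_def using w uw vw by auto
  have far: "d y * (pair_loss (\<sigma> u) (\<sigma> y) - pair_loss (\<sigma> v) (\<sigma> y)) = d y * (-1/12)"
    if y: "y \<in> R" for y
  proof -
    have "\<sigma> y \<noteq> 1" "\<sigma> y \<noteq> 2" "\<sigma> y \<noteq> 3" "\<sigma> y \<in> {1..r}"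
      using permutes_other_position[OF \<sigma>] y \<sigma>_w \<sigma>_u \<sigma>_v unfolding R_def by auto
    then show ?thesis using \<sigma>_u \<sigma>_v pair_loss_diff_2_3[of "\<sigma> y"] by simp
  qed
  have "0 = (\<Sum>y\<in>insert w R. d y * (pair_loss (\<sigma> u) (\<sigma> y) - pair_loss (\<sigma> v) (\<sigma> y)))"
    using swap_balance[OF \<sigma> u v uv] unfolding split(1) d_def by simp
  also have "\<dots> = d w * (-1/6) + (\<Sum>y\<in>R. d y * (-1/12))"
    using \<sigma>_w \<sigma>_u \<sigma>_v pair_loss_diff_2_3_at_1 sum.cong[OF refl far]
    by (simp add: sum.insert[OF split(3) split(2)])
  also have "\<dots> = d w * (-1/6) + (\<Sum>y\<in>R. d y) * (-1/12)"
    by (simp only: sum_distrib_right)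
  finally have "d w * (-1/6) + (\<Sum>y\<in>R. d y) * (-1/12) = 0" by simp
  moreover have "d w + (\<Sum>y\<in>R. d y) = 0"
    using row_sums_balance[OF u v uv] unfolding split(1) d_def[symmetric]
    by (simp add: sum.insert[OF split(3) split(2)])
  ultimately have "d w = 0" by linarith
  then show ?thesis unfolding d_def by simp
qed

lemma weights_constant:
  assumes x: "x \<in> {1..r}" and y: "y \<in> {1..r}" and xy: "x \<noteq> y"
  shows "C x y = C 1 2"
proof -
  have one: "1 \<in> {1..r}" and two: "2 \<in> {1..r}" using three_le_r by auto
  obtain z where z: "z \<in> {1..r}" "z \<noteq> 1" and C_xy: "C x y = C 1 z"
  proof (cases "x = 1")
    case True
    then show ?thesis using that[OF y] xy by simp
  next
    case x1: False
    show ?thesis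
    proof (cases "y = 1")
      case True
      then show ?thesis using that[OF x x1] C_sym by simp
    next
      case False
      then have "C x y = C 1 y" using weight_transfer[OF x one y x1 xy] by simp
      then show ?thesis using that[OF y False] by simp
    qed
  qed
  show ?thesis
  proof (cases "z = 2")
    case True
    then show ?thesis using C_xy by simp
  next
    case False
    then have "C z 1 = C 2 1" using weight_transfer[OF z(1) two one False z(2)] by simp
    then show ?thesis using C_xy C_sym by metis
  qed
qed

text \<open>The energy of the identity arrangement is the common weight times a positive number.\<close>
lemma weights_vanish:
  assumes x: "x \<in> {1..r}" and y: "y \<in> {1..r}"
  shows "C x y = 0"
proof -
  let ?R = "{1..r}"
  define F where "F x y = (if x = y then 0 else pair_loss x y)" for x y
  have "pair_energy r C id = (\<Sum>x\<in>?R. \<Sum>y\<in>?R. C 1 2 * F x y)"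
    unfolding pair_energy_def
  proof (intro sum.cong refl)
    fix x y assume "x \<in> ?R" "y \<in> ?R"
    then show "C x y * pair_loss (id x) (id y) = C 1 2 * F x y"
      using weights_constant[of x y] C_diag[of x] unfolding F_def by (cases "x = y") simp_all
  qed
  then have product_zero: "C 1 2 * (\<Sum>x\<in>?R. \<Sum>y\<in>?R. F x y) = 0"
    using energy_vanishes[OF permutes_id] by (simp add: sum_distrib_left)
  have F_nonneg: "0 \<le> F x y" if "x \<in> ?R" "y \<in> ?R" for x y
    using that pair_loss_nonneg unfolding F_def by auto
  have first_row: "0 < (\<Sum>y\<in>?R. F 1 y)"
    by (rule sum_pos2[of _ 3]) (use three_le_r F_nonneg pair_loss_1_3 in \<open>auto simp: F_def\<close>)
  have "0 < (\<Sum>x\<in>?R. \<Sum>y\<in>?R. F x y)"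
    by (rule sum_pos2[of _ 1]) (use three_le_r F_nonneg first_row in \<open>auto intro: sum_nonneg\<close>)
  then have "C 1 2 = 0" using product_zero by simp
  then show ?thesis
    using weights_constant[OF x y] C_diag[of x] by (cases "x = y") simp_all
qed

end

definition pairs :: "nat \<Rightarrow> (nat \<times> nat) set" where
  "pairs r = {(u,v). 1 \<le> u \<and> u < v \<and> v \<le> r}"

lemma finite_pairs: "finite (pairs r)"
  by (rule finite_subset[of _ "{1..r} \<times> {1..r}"]) (auto simp: pairs_def)

lemma card_pairs: "2 * card (pairs r) = r * (r - 1)"
proof (induction r)
  case 0
  have "pairs 0 = {}" unfolding pairs_def by auto
  then show ?case by simp
next
  case (Suc r)
  let ?new = "(\<lambda>u. (u, Suc r)) ` {1..r}"
  have "pairs (Suc r) = pairs r \<union> ?new" and "pairs r \<inter> ?new = {}"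
    unfolding pairs_def by auto
  moreover have "card ?new = r" by (subst card_image) (auto simp: inj_on_def)
  ultimately have "card (pairs (Suc r)) = card (pairs r) + r"
    using card_Un_disjoint[OF finite_pairs] by simp
  then show ?case using Suc.IH by (cases r) (auto simp: algebra_simps)
qed

definition sym_weight :: "(nat \<times> nat \<Rightarrow> real) \<Rightarrow> nat \<Rightarrow> nat \<Rightarrow> real" where
  "sym_weight c x y = (if x < y then c (x,y) else if y < x then c (y,x) else 0)"

lemma pair_energy_sym_weight:
  "pair_energy r (sym_weight c) \<sigma> = 2 * (\<Sum>q\<in>pairs r. c q * pair_loss (\<sigma> (fst q)) (\<sigma> (snd q)))"
proof -
  let ?R = "{1..r}"
  define K where "K x y = pair_loss (\<sigma> x) (\<sigma> y)" for x y
  define G where "G x y = (if x < y then c (x,y) * K x y else 0)" for x y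
  have split: "sym_weight c x y * K x y = G x y + G y x" for x y
    unfolding sym_weight_def G_def K_def using pair_loss_sym[of "\<sigma> x" "\<sigma> y"] by auto
  have "(\<Sum>x\<in>?R. \<Sum>y\<in>?R. G x y) = (\<Sum>q\<in>?R \<times> ?R. G (fst q) (snd q))"
    by (simp add: sum.cartesian_product split_def)
  also have "\<dots> = (\<Sum>q\<in>{q \<in> ?R \<times> ?R. fst q < snd q}. c q * K (fst q) (snd q))"
    unfolding G_def by (subst sum.inter_filter) (auto intro!: sum.cong)
  also have "{q \<in> ?R \<times> ?R. fst q < snd q} = pairs r" unfolding pairs_def by auto
  finally have G_sum: "(\<Sum>x\<in>?R. \<Sum>y\<in>?R. G x y) = (\<Sum>q\<in>pairs r. c q * K (fst q) (snd q))" .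
  have "pair_energy r (sym_weight c) \<sigma> = (\<Sum>x\<in>?R. \<Sum>y\<in>?R. G x y) + (\<Sum>x\<in>?R. \<Sum>y\<in>?R. G y x)"
    unfolding pair_energy_def K_def[symmetric] split by (simp add: sum.distrib)
  also have "(\<Sum>x\<in>?R. \<Sum>y\<in>?R. G y x) = (\<Sum>x\<in>?R. \<Sum>y\<in>?R. G x y)"
    by (rule sum.swap)
  finally show ?thesis using G_sum unfolding K_def by simp
qed

definition pair_label :: "nat \<Rightarrow> nat \<Rightarrow> nat \<Rightarrow> real" where
  "pair_label u v = (\<lambda>i. if i = u \<or> i = v then 1 else 0)"

lemma pair_label_in_ys_set: "u \<in> {1..r} \<Longrightarrow> v \<in> {1..r} \<Longrightarrow> pair_label u v \<in> ys_set r"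
  unfolding ys_set_def pair_label_def by (auto simp: fun_eq_iff)

lemma sum_indicator_pair:
  fixes a b :: nat
  assumes "finite A"
  shows "(\<Sum>j\<in>A. (if j = a \<or> j = b then 1 else 0::real)) = real (card (A \<inter> {a,b}))"
proof -
  have "(\<Sum>j\<in>A \<inter> {a,b}. (1::real)) = (\<Sum>j\<in>A. if j \<in> {a,b} then 1 else 0)"
    by (rule sum.inter_restrict[OF assms])
  then show ?thesis by simp
qed

lemma ell_MAP_pair_label:
  assumes \<sigma>: "\<sigma> permutes {1..r}" and u: "u \<in> {1..r}" and v: "v \<in> {1..r}" and uv: "u \<noteq> v"
  shows "ell_MAP r (pair_label u v) \<sigma> = pair_loss (\<sigma> u) (\<sigma> v)"
proof -
  let ?R = "{1..r}"
  have norm: "l1norm r (pair_label u v) = 2"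
  proof -
    have "l1norm r (pair_label u v) = (\<Sum>i\<in>?R. (if i = u \<or> i = v then 1 else 0::real))"
      unfolding l1norm_def pair_label_def by (intro sum.cong) auto
    also have "\<dots> = real (card (?R \<inter> {u,v}))" by (rule sum_indicator_pair) simp
    also have "?R \<inter> {u,v} = {u,v}" using u v by auto
    finally show ?thesis using uv by simp
  qed
  have relevant: "{i \<in> ?R. pair_label u v i = 1} = {u,v}" using u v unfolding pair_label_def by auto
  have \<sigma>_in: "\<sigma> u \<in> ?R" "\<sigma> v \<in> ?R" using u v permutes_in_image[OF \<sigma>] by auto
  have \<sigma>_ne: "\<sigma> u \<noteq> \<sigma> v" using uv permutes_inj[OF \<sigma>] by (auto dest: injD)
  text \<open>Among the items up to the position of x, the other item y is counted iff it comes first.\<close>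
  have prefix_count: "(\<Sum>j=1..\<sigma> x. pair_label u v (inv_into UNIV \<sigma> j)) = (if \<sigma> y < \<sigma> x then 2 else 1)"
    if xy: "(x = u \<and> y = v) \<or> (x = v \<and> y = u)" for x y
  proof -
    have "pair_label u v (inv_into UNIV \<sigma> j) = (if j = \<sigma> x \<or> j = \<sigma> y then 1 else 0)" for j
    proof -
      have inv: "inv_into UNIV \<sigma> j = w \<longleftrightarrow> \<sigma> w = j" for w by (rule permutes_inv_eq[OF \<sigma>])
      have "(inv_into UNIV \<sigma> j = u \<or> inv_into UNIV \<sigma> j = v) \<longleftrightarrow> (j = \<sigma> x \<or> j = \<sigma> y)"
        by (simp only: inv) (use xy in auto)
      then show ?thesis unfolding pair_label_def by (simp only:)
    qed
    then have "(\<Sum>j=1..\<sigma> x. pair_label u v (inv_into UNIV \<sigma> j)) = real (card ({1..\<sigma> x} \<inter> {\<sigma> x, \<sigma> y}))"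
      using sum_indicator_pair[of "{1..\<sigma> x}" "\<sigma> x" "\<sigma> y"] by simp
    also have "{1..\<sigma> x} \<inter> {\<sigma> x, \<sigma> y} = (if \<sigma> y < \<sigma> x then {\<sigma> x, \<sigma> y} else {\<sigma> x})"
      using xy \<sigma>_in \<sigma>_ne by auto
    finally show ?thesis using xy \<sigma>_ne by auto
  qed
  have "ell_MAP r (pair_label u v) \<sigma> = 1 - (1/2) * ((1 / real (\<sigma> u)) * (if \<sigma> v < \<sigma> u then 2 else 1)
         + (1 / real (\<sigma> v)) * (if \<sigma> u < \<sigma> v then 2 else 1))"
    unfolding ell_MAP_def norm relevant using uv prefix_count[of u v] prefix_count[of v u] by simp
  also have "\<dots> = pair_loss (\<sigma> u) (\<sigma> v)" by (rule pair_loss_by_precedence[OF \<sigma>_ne])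
  finally show ?thesis .
qed

lemma pair_rows_independent:
  assumes r: "3 \<le> r"
    and vanish: "\<And>\<sigma>. \<sigma> permutes {1..r} \<Longrightarrow>
      (\<Sum>q\<in>pairs r. c q * ell_MAP r (pair_label (fst q) (snd q)) \<sigma>) = 0"
  shows "\<forall>q\<in>pairs r. c q = 0"
proof
  have "pair_energy r (sym_weight c) \<sigma> = 0" if \<sigma>: "\<sigma> permutes {1..r}" for \<sigma>
  proof -
    have "ell_MAP r (pair_label (fst q) (snd q)) \<sigma> = pair_loss (\<sigma> (fst q)) (\<sigma> (snd q))"
      if "q \<in> pairs r" for q
      using that by (intro ell_MAP_pair_label[OF \<sigma>]) (auto simp: pairs_def)
    then show ?thesis using vanish[OF \<sigma>] unfolding pair_energy_sym_weight by (simp cong: sum.cong)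
  qed
  moreover have "sym_weight c x x = 0" and "sym_weight c x y = sym_weight c y x" for x y
    unfolding sym_weight_def by auto
  ultimately have zero: "x \<in> {1..r} \<Longrightarrow> y \<in> {1..r} \<Longrightarrow> sym_weight c x y = 0" for x y
    using weights_vanish[OF r] by blast
  fix q assume q: "q \<in> pairs r"
  then obtain u v where "q = (u, v)" "u < v" "u \<in> {1..r}" "v \<in> {1..r}" unfolding pairs_def by auto
  then show "c q = 0" using zero[of u v] unfolding sym_weight_def by simp
qed

section \<open>Independent rows bound the rank from below\<close>

lemma (in vec_space) many_vectors_dependent:
  fixes W :: "'a vec set"
  assumes W: "W \<subseteq> carrier_vec n" and "finite W" and "n < card W"
  shows "\<exists>a. (\<forall>l<n. (\<Sum>x\<in>W. a x * x $ l) = 0) \<and> (\<exists>v\<in>W. a v \<noteq> 0)"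
proof -
  have "lin_dep W"
  proof (rule ccontr)
    assume "\<not> lin_dep W"
    then have "card W \<le> dim" using li_le_dim(2)[OF fin_dim] W by simp
    then show False using assms(3) dim_is_n by simp
  qed
  then obtain a v where a: "lincomb a W = 0\<^sub>v n" and v: "v \<in> W" "a v \<noteq> 0"
    using finite_lin_dep[OF assms(2)] W by auto
  have "(\<Sum>x\<in>W. a x * x $ l) = 0" if "l < n" for l
    using lincomb_index[OF that W, of a] a that by simp
  then show ?thesis using v by blast
qed

text \<open>The same for an indexed family, which may contain repetitions.\<close>
lemma family_dependent:
  fixes w :: "'q \<Rightarrow> 'a::field vec"
  assumes Q: "finite Q" and w: "\<And>q. q \<in> Q \<Longrightarrow> w q \<in> carrier_vec m" and m: "m < card Q"
  shows "\<exists>c. (\<forall>l<m. (\<Sum>q\<in>Q. c q * w q $ l) = 0) \<and> (\<exists>q\<in>Q. c q \<noteq> 0)"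
proof (cases "inj_on w Q")
  case False
  then obtain q1 q2 where q: "q1 \<in> Q" "q2 \<in> Q" "q1 \<noteq> q2" "w q1 = w q2"
    unfolding inj_on_def by blast
  define c where "c q = (if q = q1 then 1 else if q = q2 then -1 else (0::'a))" for q
  have "(\<Sum>q\<in>Q. c q * w q $ l) = 0" for l
  proof -
    have "(\<Sum>q\<in>Q. c q * w q $ l)
        = (\<Sum>q\<in>Q. if q = q1 then w q $ l else 0) - (\<Sum>q\<in>Q. if q = q2 then w q $ l else 0)"
      unfolding sum_subtractf[symmetric] c_def using q(3) by (intro sum.cong) auto
    also have "\<dots> = 0" using q Q by (simp add: sum.delta)
    finally show ?thesis .
  qed
  moreover have "c q1 \<noteq> 0" unfolding c_def by simp
  ultimately show ?thesis using q(1) by blast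
next
  case True
  have "w ` Q \<subseteq> carrier_vec m" using w by blast
  moreover have "m < card (w ` Q)" using card_image[OF True] m by simp
  ultimately obtain a where a: "\<forall>l<m. (\<Sum>x\<in>w ` Q. a x * x $ l) = 0" and "\<exists>v\<in>w ` Q. a v \<noteq> 0"
    using vec_space.many_vectors_dependent[of "w ` Q" m] Q by auto
  then have "\<exists>q\<in>Q. a (w q) \<noteq> 0" by blast
  moreover have "\<forall>l<m. (\<Sum>q\<in>Q. a (w q) * w q $ l) = 0"
    using a sum.reindex[OF True, of "\<lambda>x. a x * x $ l" for l] by simp
  ultimately show ?thesis by (intro exI[of _ "\<lambda>q. a (w q)"] conjI)
qed

lemma (in vec_space) rank_spanning_columns:
  assumes A: "A \<in> carrier_mat n nc"
  shows "\<exists>S. finite S \<and> S \<subseteq> carrier_vec n \<and> card S = rank A \<and> (\<forall>j<nc. col A j \<in> span S)"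
proof -
  have cols: "set (cols A) \<subseteq> carrier_vec n" using A cols_dim by blast
  have "{} \<subseteq> set (cols A) \<and> lin_indpt {}"
    by (metis (no_types) empty_subsetI fin_dim finite_basis_exists subset_li_is_li vec_vs vectorspace.basis_def)
  then obtain S where S: "finite S" and max: "maximal S (\<lambda>T. T \<subseteq> set (cols A) \<and> lin_indpt T)"
    using maximal_exists_superset[of "set (cols A)" "\<lambda>T. T \<subseteq> set (cols A) \<and> lin_indpt T" "{}"] by blast
  have S_cols: "S \<subseteq> set (cols A)" and indep: "lin_indpt S" using max unfolding maximal_def by auto
  have S_carrier: "S \<subseteq> carrier_vec n" using S_cols cols by blast
  have "s \<in> span S" if s: "s \<in> set (cols A)" for s
  proof (rule ccontr)
    assume out: "s \<notin> span S"
    then have "s \<notin> S" using in_own_span[OF S_carrier] by blast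
    moreover have "lin_indpt (S \<union> {s})"
      using lin_dep_iff_in_span[OF S_carrier indep _ \<open>s \<notin> S\<close>] s cols out by auto
    ultimately have "S \<union> {s} \<noteq> S" "S \<subseteq> S \<union> {s}" "S \<union> {s} \<subseteq> set (cols A)"
      using s S_cols by auto
    then show False using max \<open>lin_indpt (S \<union> {s})\<close> unfolding maximal_def by blast
  qed
  moreover have "col A j \<in> set (cols A)" if "j < nc" for j using that A by (simp add: cols_def)
  ultimately have "\<forall>j<nc. col A j \<in> span S" by blast
  then show ?thesis using S S_carrier rank_card_indpt[OF A max] by (intro exI[of _ S]) simp
qed

text \<open>Otherwise the restrictions of these rows to a spanning set of rank A columns would be more than
  rank A vectors of dimension rank A, hence dependent; the dependency extends to all columns.\<close>
lemma (in vec_space) rank_ge_independent_rows: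
  fixes A :: "'a mat" and Q :: "'q set" and f :: "'q \<Rightarrow> nat"
  assumes A: "A \<in> carrier_mat n nc" and Q: "finite Q" and f: "\<And>q. q \<in> Q \<Longrightarrow> f q < n"
    and indep: "\<And>c. (\<And>j. j < nc \<Longrightarrow> (\<Sum>q\<in>Q. c q * A $$ (f q, j)) = 0) \<Longrightarrow> \<forall>q\<in>Q. c q = 0"
  shows "card Q \<le> rank A"
proof (rule ccontr)
  assume "\<not> ?thesis"
  then have less: "rank A < card Q" by simp
  obtain S where S: "finite S" "S \<subseteq> carrier_vec n" "card S = rank A"
    and spans: "\<And>j. j < nc \<Longrightarrow> col A j \<in> span S"
    using rank_spanning_columns[OF A] by blast
  obtain bs where bs: "set bs = S" "distinct bs" using finite_distinct_list[OF S(1)] by blast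
  have len: "length bs = rank A" using distinct_card[OF bs(2)] bs(1) S(3) by simp
  have "\<exists>c. (\<forall>l<rank A. (\<Sum>q\<in>Q. c q * vec (rank A) (\<lambda>l. bs ! l $ f q) $ l) = 0)
      \<and> (\<exists>q\<in>Q. c q \<noteq> 0)"
    by (rule family_dependent[OF Q _ less]) simp
  then obtain c where c: "\<forall>l<rank A. (\<Sum>q\<in>Q. c q * vec (rank A) (\<lambda>l. bs ! l $ f q) $ l) = 0"
    and nontrivial: "\<exists>q\<in>Q. c q \<noteq> 0"
    by blast
  have on_S: "(\<Sum>q\<in>Q. c q * b $ f q) = 0" if "b \<in> S" for b
  proof -
    have "b \<in> set bs" using that bs(1) by simp
    then obtain l where "l < length bs" "bs ! l = b" by (auto simp: in_set_conv_nth)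
    then show ?thesis using c len by auto
  qed
  have "(\<Sum>q\<in>Q. c q * A $$ (f q, j)) = 0" if j: "j < nc" for j
  proof -
    obtain a B where B: "B \<subseteq> S" "finite B" and col: "col A j = lincomb a B"
      using spans[OF j] unfolding span_def by blast
    have B_carrier: "B \<subseteq> carrier_vec n" using B S(2) by blast
    have entry: "A $$ (f q, j) = (\<Sum>b\<in>B. a b * b $ f q)" if q: "q \<in> Q" for q
    proof -
      have "A $$ (f q, j) = col A j $ f q" using f[OF q] j A by simp
      then show ?thesis unfolding col using lincomb_index[OF f[OF q] B_carrier] by simp
    qed
    have "(\<Sum>q\<in>Q. c q * A $$ (f q, j)) = (\<Sum>q\<in>Q. \<Sum>b\<in>B. a b * (c q * b $ f q))"
      using entry by (simp add: sum_distrib_left algebra_simps)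
    also have "\<dots> = (\<Sum>b\<in>B. a b * (\<Sum>q\<in>Q. c q * b $ f q))"
      by (subst sum.swap) (simp add: sum_distrib_left)
    also have "\<dots> = 0" using on_S B(1) by (intro sum.neutral) auto
    finally show ?thesis .
  qed
  then show False using indep nontrivial by blast
qed

text \<open>For r \<ge> 3 the rank of the loss matrix is at least the number of pairs: every pair label
  occurs as a row, every permutation as a column, and these rows are independent.\<close>
lemma L_MAP_rank_ge_pairs:
  assumes r: "3 \<le> r" and ys: "set ys = ys_set r" and ss: "set ss = perms_set r"
  shows "card (pairs r) \<le> vec_space.rank (length ys) (L_MAP r ys ss)"
proof -
  let ?L = "L_MAP r ys ss"
  have "\<forall>q\<in>pairs r. \<exists>a. a < length ys \<and> ys ! a = pair_label (fst q) (snd q)"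
    using pair_label_in_ys_set ys by (force simp: pairs_def in_set_conv_nth[symmetric])
  then obtain f where f: "\<And>q. q \<in> pairs r \<Longrightarrow> f q < length ys \<and> ys ! f q = pair_label (fst q) (snd q)"
    by metis
  show ?thesis
  proof (rule vec_space.rank_ge_independent_rows[OF _ finite_pairs])
    show "?L \<in> carrier_mat (length ys) (length ss)" unfolding L_MAP_def by simp
    show "f q < length ys" if "q \<in> pairs r" for q using f[OF that] by simp
    fix c assume vanish: "\<And>j. j < length ss \<Longrightarrow> (\<Sum>q\<in>pairs r. c q * ?L $$ (f q, j)) = 0"
    show "\<forall>q\<in>pairs r. c q = 0"
    proof (rule pair_rows_independent[OF r])
      fix \<sigma> assume "\<sigma> permutes {1..r}"
      then have "\<sigma> \<in> set ss" using ss unfolding perms_set_def by simp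
      then obtain j where j: "j < length ss" "ss ! j = \<sigma>" by (auto simp: in_set_conv_nth)
      then show "(\<Sum>q\<in>pairs r. c q * ell_MAP r (pair_label (fst q) (snd q)) \<sigma>) = 0"
        using vanish[OF j(1)] f unfolding L_MAP_def by (simp cong: sum.cong)
    qed
  qed
qed

text \<open>The main theorem; for r = 2 the bound is negative and hence trivial.\<close>
theorem mainTheorem17:
  fixes r :: nat and ys :: "(nat \<Rightarrow> real) list" and ss :: "(nat \<Rightarrow> nat) list"
  assumes "r \<ge> 2"
    and "distinct ys" and "set ys = ys_set r"
    and "distinct ss" and "set ss = perms_set r"
  shows "real (vec_space.rank (length ys) (L_MAP r ys ss)) \<ge> real r * (real r - 1) / 2 - 2"
proof (cases "r = 2")
  case True
  then show ?thesis by simp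
next
  case False
  then have r: "3 \<le> r" using assms(1) by simp
  have "real (2 * card (pairs r)) = real (r * (r - 1))" by (simp only: card_pairs)
  then have "2 * real (card (pairs r)) = real r * (real r - 1)" using r by (simp add: of_nat_diff)
  moreover have "card (pairs r) \<le> vec_space.rank (length ys) (L_MAP r ys ss)"
    using L_MAP_rank_ge_pairs[OF r assms(3) assms(5)] .
  ultimately show ?thesis by linarith
qed
end
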